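(* Let $G$ be a connected oriented graph derived from a Burling tree $(T,r,\ell,c)$, and suppose that $G$ has no cut vertex and no vertex of degree at most $1$. Let $S$ be the top-set of $G$. Then: (i) $G[S]$ is an in-star with at least two leaves (so $G$ has a unique pivot and its in-neighbors in $G[S]$ are the antennas of $G$); (ii) all vertices of $S\setminus\{v\}$ are sources of $G$, where $v$ is the unique sink of $G[S]$; (iii) the pivot of $G$ is an ancestor in $T$ of all vertices of $V(G)\setminus S$.
   Context: Oriented graphs are finite, without loops, multiple arcs or pairs of opposite arcs; connectivity, degree and cut vertices refer to the underlying graph. In a rooted tree $T$ with root $r$, each non-root vertex $v$ has a parent $p(v)$; children, leaves, ancestors and descendants are as usual. A branch is a sequence $v_1\dots v_k$ ($k\ge0$) with $v_i$ the parent of $v_{i+1}$; it starts at $v_1$. A Burling tree is a 4-tuple $(T,r,\ell,c)$: $T$ a rooted tree with root $r$; $\ell$ assigns to each non-leaf vertex $v$ one of its children $\ell(v)$ (the last-born of $v$); $c$ assigns to every vertex $v$ that is neither the root nor a last-born the vertex-set of a (possibly empty) branch starting at $\ell(p(v))$, and $c(v)=\emptyset$ if $v$ is the root or a last-born. The oriented graph fully derived from it has vertex-set $V(T)$ and an arc $uv$ iff $v\in c(u)$; an oriented graph is derived from the Burling tree if it is an induced subgraph of the fully derived one. The top-set of $G$ (with respect to $T$) is the set of vertices $v$ of $G$ such that $v$ is the only vertex of $G$ on the branch of $T$ from $r$ to $v$. A pivot of $G$ is a sink of $G[S]$ and an antenna of $G$ is a source of $G[S]$, where $S$ is the top-set.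 An in-tree is an oriented graph obtained from a rooted tree by orienting every edge towards the root; an in-star is an in-tree whose unique sink is adjacent to all other vertices; its leaves are its vertices other than the sink. *)

theory Defs
  imports Main
begin

text \<open>A rooted tree on the finite vertex set V with root r and parent function p
  (the value p r is irrelevant): every vertex reaches the root by iterating p.\<close>
definition rooted_tree :: "'a set \<Rightarrow> 'a \<Rightarrow> ('a \<Rightarrow> 'a) \<Rightarrow> bool" where
  "rooted_tree V r p \<longleftrightarrow> finite V \<and> r \<in> V \<and> (\<forall>v\<in>V. v \<noteq> r \<longrightarrow> p v \<in> V)
     \<and> (\<forall>v\<in>V. \<exists>n. (p ^^ n) v = r)"

text \<open>u is a proper ancestor of v (parents are only taken at non-root vertices).\<close>
definition ancestor :: "'a \<Rightarrow> ('a \<Rightarrow> 'a) \<Rightarrow> 'a \<Rightarrow> 'a \<Rightarrow> bool" where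
  "ancestor r p u v \<longleftrightarrow> (\<exists>n>0. (p ^^ n) v = u \<and> (\<forall>k<n. (p ^^ k) v \<noteq> r))"

definition ancestor_eq :: "'a \<Rightarrow> ('a \<Rightarrow> 'a) \<Rightarrow> 'a \<Rightarrow> 'a \<Rightarrow> bool" where
  "ancestor_eq r p u v \<longleftrightarrow> u = v \<or> ancestor r p u v"

definition children :: "'a set \<Rightarrow> 'a \<Rightarrow> ('a \<Rightarrow> 'a) \<Rightarrow> 'a \<Rightarrow> 'a set" where
  "children V r p v = {w \<in> V. w \<noteq> r \<and> p w = v}"

definition is_leaf :: "'a set \<Rightarrow> 'a \<Rightarrow> ('a \<Rightarrow> 'a) \<Rightarrow> 'a \<Rightarrow> bool" where
  "is_leaf V r p v \<longleftrightarrow> children V r p v = {}"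

definition branch_set :: "'a set \<Rightarrow> 'a \<Rightarrow> ('a \<Rightarrow> 'a) \<Rightarrow> 'a \<Rightarrow> 'a set \<Rightarrow> bool" where
  "branch_set V r p x B \<longleftrightarrow> B = {} \<or>
     (\<exists>y\<in>V. ancestor_eq r p x y \<and> B = {z. ancestor_eq r p x z \<and> ancestor_eq r p z y})"

definition last_born :: "'a \<Rightarrow> ('a \<Rightarrow> 'a) \<Rightarrow> ('a \<Rightarrow> 'a) \<Rightarrow> 'a \<Rightarrow> bool" where
  "last_born r p l v \<longleftrightarrow> v \<noteq> r \<and> l (p v) = v"

definition burling_tree ::
  "'a set \<Rightarrow> 'a \<Rightarrow> ('a \<Rightarrow> 'a) \<Rightarrow> ('a \<Rightarrow> 'a) \<Rightarrow> ('a \<Rightarrow> 'a set) \<Rightarrow> bool" where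
  "burling_tree V r p l c \<longleftrightarrow> rooted_tree V r p
     \<and> (\<forall>v\<in>V. \<not> is_leaf V r p v \<longrightarrow> l v \<in> children V r p v)
     \<and> (\<forall>v\<in>V. v \<noteq> r \<and> \<not> last_born r p l v \<longrightarrow> branch_set V r p (l (p v)) (c v))
     \<and> (\<forall>v\<in>V. (v = r \<or> last_born r p l v) \<longrightarrow> c v = {})"

definition arc :: "('a \<Rightarrow> 'a set) \<Rightarrow> 'a set \<Rightarrow> 'a \<Rightarrow> 'a \<Rightarrow> bool" where
  "arc c X u v \<longleftrightarrow> u \<in> X \<and> v \<in> X \<and> v \<in> c u"

definition adj :: "('a \<Rightarrow> 'a \<Rightarrow> bool) \<Rightarrow> 'a \<Rightarrow> 'a \<Rightarrow> bool" where
  "adj A u v \<longleftrightarrow> A u v \<or> A v u"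

definition connected_on :: "('a \<Rightarrow> 'a \<Rightarrow> bool) \<Rightarrow> 'a set \<Rightarrow> bool" where
  "connected_on A Y \<longleftrightarrow> Y \<noteq> {} \<and>
     (\<forall>u\<in>Y. \<forall>v\<in>Y. (u, v) \<in> {(a, b). a \<in> Y \<and> b \<in> Y \<and> adj A a b}\<^sup>*)"

definition cut_vertex :: "('a \<Rightarrow> 'a \<Rightarrow> bool) \<Rightarrow> 'a set \<Rightarrow> 'a \<Rightarrow> bool" where
  "cut_vertex A Y v \<longleftrightarrow> v \<in> Y \<and> (\<exists>a\<in>Y - {v}. \<exists>b\<in>Y - {v}.
     (a, b) \<notin> {(x, y). x \<in> Y - {v} \<and> y \<in> Y - {v} \<and> adj A x y}\<^sup>*)"

definition degree :: "('a \<Rightarrow> 'a \<Rightarrow> bool) \<Rightarrow> 'a set \<Rightarrow> 'a \<Rightarrow> nat" where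
  "degree A Y v = card {u \<in> Y. adj A v u}"

definition is_sink :: "('a \<Rightarrow> 'a \<Rightarrow> bool) \<Rightarrow> 'a set \<Rightarrow> 'a \<Rightarrow> bool" where
  "is_sink A Y v \<longleftrightarrow> v \<in> Y \<and> (\<forall>w\<in>Y. \<not> A v w)"

definition is_source :: "('a \<Rightarrow> 'a \<Rightarrow> bool) \<Rightarrow> 'a set \<Rightarrow> 'a \<Rightarrow> bool" where
  "is_source A Y v \<longleftrightarrow> v \<in> Y \<and> (\<forall>w\<in>Y. \<not> A w v)"

definition in_tree :: "('a \<Rightarrow> 'a \<Rightarrow> bool) \<Rightarrow> 'a set \<Rightarrow> bool" where
  "in_tree A Y \<longleftrightarrow> (\<exists>rt q. rooted_tree Y rt q \<and>
     (\<forall>u\<in>Y. \<forall>w\<in>Y. A u w \<longleftrightarrow> (u \<noteq> rt \<and> w = q u)))"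

definition in_star_with_sink :: "('a \<Rightarrow> 'a \<Rightarrow> bool) \<Rightarrow> 'a set \<Rightarrow> 'a \<Rightarrow> bool" where
  "in_star_with_sink A Y s \<longleftrightarrow> in_tree A Y \<and> {v. is_sink A Y v} = {s}
     \<and> (\<forall>u\<in>Y - {s}. adj A u s)"

definition top_set :: "'a \<Rightarrow> ('a \<Rightarrow> 'a) \<Rightarrow> 'a set \<Rightarrow> 'a set" where
  "top_set r p X = {v \<in> X. {u. ancestor_eq r p u v} \<inter> X = {v}}"

definition pivots :: "'a \<Rightarrow> ('a \<Rightarrow> 'a) \<Rightarrow> ('a \<Rightarrow> 'a set) \<Rightarrow> 'a set \<Rightarrow> 'a set" where
  "pivots r p c X = {v. is_sink (arc c (top_set r p X)) (top_set r p X) v}"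

definition antennas :: "'a \<Rightarrow> ('a \<Rightarrow> 'a) \<Rightarrow> ('a \<Rightarrow> 'a set) \<Rightarrow> 'a set \<Rightarrow> 'a set" where
  "antennas r p c X = {v. is_source (arc c (top_set r p X)) (top_set r p X) v}"

end

theory Submission
  imports Defs
begin

text \<open>Every vertex x of G lies below a unique vertex top_of x of the top-set S. The out-neighbourhood
  c u of a vertex u is a branch hanging below a sibling of u; hence an arc between two different
  top-classes leaves a top vertex and may be redirected to the top vertex above its head. Arcs
  strictly increase 2 * depth u (plus 1 when c u is empty), so G is acyclic and has a pivot s.
  If t \<rightarrow> t' is an arc inside S and t is not a cut vertex, then the class of t is {t} and no top vertex
  points to t. Connectivity then forces every vertex to lie in the class of s or to be a top vertex
  with an arc to s, which yields the in-star, the sources and the ancestry claim; the degree of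
  s provides the two leaves.\<close>

section \<open>Connectivity and in-stars\<close>

lemma connected_on_subset_if_closed:
  assumes "connected_on A Y" and "y \<in> Y" and "y \<in> Z"
    and "\<And>x z. x \<in> Z \<Longrightarrow> z \<in> Y \<Longrightarrow> adj A x z \<Longrightarrow> z \<in> Z"
  shows "Y \<subseteq> Z"
proof
  fix x
  assume "x \<in> Y"
  then have "(y, x) \<in> {(a, b). a \<in> Y \<and> b \<in> Y \<and> adj A a b}\<^sup>*"
    using assms(1,2) unfolding connected_on_def by blast
  then show "x \<in> Z"
    by induction (use assms(3,4) in auto)
qed

lemma not_cut_vertex_subset_if_closed:
  assumes "\<not> cut_vertex A Y v" and "v \<in> Y" and "y \<in> Y - {v}" and "y \<in> Z"
    and "\<And>x z. x \<in> Z \<Longrightarrow> x \<noteq> v \<Longrightarrow> z \<in> Y \<Longrightarrow> adj A x z \<Longrightarrow> z \<in> Z"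
  shows "Y - {v} \<subseteq> Z"
proof
  fix x
  assume "x \<in> Y - {v}"
  then have "(y, x) \<in> {(a, b). a \<in> Y - {v} \<and> b \<in> Y - {v} \<and> adj A a b}\<^sup>*"
    using assms(1-3) unfolding cut_vertex_def by blast
  then show "x \<in> Z"
    by induction (use assms(4,5) in auto)
qed

lemma in_star_with_sinkI:
  assumes "finite Y" and "s \<in> Y"
    and "\<And>u w. u \<in> Y \<Longrightarrow> w \<in> Y \<Longrightarrow> A u w \<longleftrightarrow> u \<noteq> s \<and> w = s"
  shows "in_star_with_sink A Y s"
proof -
  have "rooted_tree Y s (\<lambda>_. s)"
    unfolding rooted_tree_def using assms(1,2) by (auto intro: exI[of _ 1])
  then have "in_tree A Y"
    unfolding in_tree_def using assms(3) by blast
  moreover have "{v. is_sink A Y v} = {s}"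
    unfolding is_sink_def using assms(2,3) by auto
  ultimately show ?thesis
    unfolding in_star_with_sink_def adj_def using assms(2,3) by blast
qed

lemma sources_of_in_star:
  assumes "s \<in> Y" and "Y - {s} \<noteq> {}"
    and "\<And>u w. u \<in> Y \<Longrightarrow> w \<in> Y \<Longrightarrow> A u w \<longleftrightarrow> u \<noteq> s \<and> w = s"
  shows "{v. is_source A Y v} = {u \<in> Y. A u s}"
  using assms unfolding is_source_def by auto

section \<open>Ancestry in rooted trees\<close>

locale tree =
  fixes V :: "'a set" and r :: 'a and p :: "'a \<Rightarrow> 'a"
  assumes rooted: "rooted_tree V r p"
begin

abbreviation anc_eq :: "'a \<Rightarrow> 'a \<Rightarrow> bool" (infix \<open>\<preceq>\<close> 50)
  where "a \<preceq> b \<equiv> ancestor_eq r p a b"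

lemma anc_eq_refl [simp]: "a \<preceq> a"
  by (simp add: ancestor_eq_def)

lemma finite_V: "finite V"
  using rooted by (simp add: rooted_tree_def)

lemma parent_in_V: "v \<in> V \<Longrightarrow> v \<noteq> r \<Longrightarrow> p v \<in> V"
  using rooted by (simp add: rooted_tree_def)

definition depth :: "'a \<Rightarrow> nat" where
  "depth v = (LEAST n. (p ^^ n) v = r)"

lemma funpow_depth: "v \<in> V \<Longrightarrow> (p ^^ depth v) v = r"
  unfolding depth_def by (rule LeastI_ex) (use rooted in \<open>auto simp: rooted_tree_def\<close>)

lemma funpow_less_depth: "k < depth v \<Longrightarrow> (p ^^ k) v \<noteq> r"
  unfolding depth_def using not_less_Least by blast

lemma depth_root: "depth r = 0"
  unfolding depth_def by (rule Least_equality) auto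

lemma funpow_in_V: "v \<in> V \<Longrightarrow> k \<le> depth v \<Longrightarrow> (p ^^ k) v \<in> V"
  by (induction k) (simp_all add: parent_in_V funpow_less_depth Suc_le_eq)

lemma depth_funpow:
  assumes "v \<in> V" and "n \<le> depth v"
  shows "depth ((p ^^ n) v) = depth v - n"
  unfolding depth_def[of "(p ^^ n) v"]
proof (rule Least_equality)
  have "(p ^^ (depth v - n)) ((p ^^ n) v) = (p ^^ (depth v - n + n)) v"
    by (simp add: funpow_add)
  also have "\<dots> = r"
    using assms by (simp add: funpow_depth)
  finally show "(p ^^ (depth v - n)) ((p ^^ n) v) = r" .
next
  fix m
  assume "(p ^^ m) ((p ^^ n) v) = r"
  then have "(p ^^ (m + n)) v = r"
    by (simp add: funpow_add)
  then show "depth v - n \<le> m"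
    using funpow_less_depth[of "m + n" v] by linarith
qed

lemma anc_eq_iff_funpow:
  assumes "b \<in> V"
  shows "a \<preceq> b \<longleftrightarrow> (\<exists>n \<le> depth b. (p ^^ n) b = a)"
proof
  assume "a \<preceq> b"
  then consider "a = b" | n where "n > 0" "(p ^^ n) b = a" "\<forall>k<n. (p ^^ k) b \<noteq> r"
    unfolding ancestor_eq_def ancestor_def by blast
  then show "\<exists>n \<le> depth b. (p ^^ n) b = a"
  proof cases
    case 1
    then show ?thesis by (intro exI[of _ 0]) simp
  next
    case (2 n)
    then have "n \<le> depth b"
      using funpow_depth[OF assms] by (metis not_le)
    with 2 show ?thesis by blast
  qed
next
  assume "\<exists>n \<le> depth b. (p ^^ n) b = a"
  then obtain n where "n \<le> depth b" and "(p ^^ n) b = a" by blast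
  then show "a \<preceq> b"
    unfolding ancestor_eq_def ancestor_def
    by (metis funpow_0 funpow_less_depth less_le_trans not_gr0)
qed

lemma anc_eq_depth:
  assumes "b \<in> V" and "a \<preceq> b"
  obtains n where "n \<le> depth b" and "(p ^^ n) b = a" and "depth a = depth b - n"
proof -
  obtain n where "n \<le> depth b" and "(p ^^ n) b = a"
    using assms anc_eq_iff_funpow by blast
  with that show ?thesis
    using depth_funpow[OF assms(1)] by blast
qed

lemma anc_eq_in_V: "b \<in> V \<Longrightarrow> a \<preceq> b \<Longrightarrow> a \<in> V"
  using anc_eq_iff_funpow[of b a] funpow_in_V[of b] by blast

lemma depth_anc_eq_le: "b \<in> V \<Longrightarrow> a \<preceq> b \<Longrightarrow> depth a \<le> depth b"
  by (metis anc_eq_depth diff_le_self)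

lemma anc_eq_depth_eq:
  assumes "b \<in> V" and "a \<preceq> b" and "depth a = depth b"
  shows "a = b"
proof -
  obtain n where "n \<le> depth b" and "(p ^^ n) b = a" and "depth a = depth b - n"
    using anc_eq_depth assms(1,2) by blast
  moreover from calculation assms(3) have "n = 0"
    by linarith
  ultimately show ?thesis
    by simp
qed

lemma funpow_anc_eq:
  assumes "x \<in> V" and "n \<le> m" and "m \<le> depth x"
  shows "(p ^^ m) x \<preceq> (p ^^ n) x"
proof -
  have "(p ^^ (m - n)) ((p ^^ n) x) = (p ^^ (m - n + n)) x"
    by (simp add: funpow_add)
  then have "(p ^^ (m - n)) ((p ^^ n) x) = (p ^^ m) x"
    using assms(2) by simp
  moreover have "m - n \<le> depth ((p ^^ n) x)"
    using assms depth_funpow by simp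
  ultimately show ?thesis
    using anc_eq_iff_funpow[of "(p ^^ n) x" "(p ^^ m) x"] funpow_in_V assms by (meson order.trans)
qed

lemma anc_eq_trans:
  assumes "z \<in> V" and "a \<preceq> b" and "b \<preceq> z"
  shows "a \<preceq> z"
proof -
  obtain n where n: "n \<le> depth z" "(p ^^ n) z = b" "depth b = depth z - n"
    using anc_eq_depth assms(1,3) by blast
  obtain m where m: "m \<le> depth b" "(p ^^ m) b = a"
    using anc_eq_iff_funpow[of b a] anc_eq_in_V assms by blast
  have "(p ^^ (m + n)) z = a"
    using n m by (simp add: funpow_add)
  moreover have "m + n \<le> depth z"
    using n m by simp
  ultimately show ?thesis
    using anc_eq_iff_funpow[OF assms(1), of a] by blast
qed

lemma anc_eq_linear:
  assumes "x \<in> V" and "a \<preceq> x" and "b \<preceq> x"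
  shows "a \<preceq> b \<or> b \<preceq> a"
proof -
  obtain n m where "n \<le> depth x" "(p ^^ n) x = a" "m \<le> depth x" "(p ^^ m) x = b"
    using assms anc_eq_iff_funpow[of x a] anc_eq_iff_funpow[of x b] by meson
  then show ?thesis
    using funpow_anc_eq[OF assms(1)] by (metis nat_le_linear)
qed

lemma depth_parent:
  assumes "b \<in> V" and "b \<noteq> r"
  shows "depth b = Suc (depth (p b))"
proof -
  have "depth b \<noteq> 0"
    using funpow_depth[OF assms(1)] assms(2) by (metis funpow_0)
  then show ?thesis
    using depth_funpow[OF assms(1), of 1] by simp
qed

lemma parent_anc_eq: "b \<in> V \<Longrightarrow> b \<noteq> r \<Longrightarrow> p b \<preceq> b"
  using funpow_anc_eq[of b 0 1] depth_parent by simp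

lemma anc_eq_parent:
  assumes "b \<in> V" and "a \<preceq> b" and "a \<noteq> b"
  shows "a \<preceq> p b"
proof -
  obtain n where n: "n \<le> depth b" "(p ^^ n) b = a"
    using anc_eq_iff_funpow[of b a] assms(1,2) by blast
  with assms(3) obtain k where k: "n = Suc k"
    by (metis funpow_0 not0_implies_Suc)
  with n have "b \<noteq> r"
    using depth_root by auto
  with n k have "k \<le> depth (p b)" and "(p ^^ k) (p b) = a"
    using assms(1) depth_parent by (simp_all add: funpow_swap1)
  then show ?thesis
    using anc_eq_iff_funpow[of "p b" a] parent_in_V assms(1) \<open>b \<noteq> r\<close> by blast
qed

end

section \<open>Arcs of a Burling tree\<close>

locale burling =
  fixes V :: "'a set" and r :: 'a and p l :: "'a \<Rightarrow> 'a" and c :: "'a \<Rightarrow> 'a set"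
  assumes burling: "burling_tree V r p l c"
begin

sublocale tree V r p
  using burling by unfold_locales (simp add: burling_tree_def)

abbreviation last_sibling :: "'a \<Rightarrow> 'a" where
  "last_sibling u \<equiv> l (p u)"

lemma arc_setE:
  assumes "u \<in> V" and "v \<in> c u"
  obtains y where "u \<noteq> r" and "\<not> last_born r p l u"
    and "y \<in> V" and "c u = {z. last_sibling u \<preceq> z \<and> z \<preceq> y}"
proof -
  have "u \<noteq> r" and "\<not> last_born r p l u"
    using burling assms unfolding burling_tree_def by blast+
  moreover from this have "branch_set V r p (last_sibling u) (c u)"
    using burling assms(1) unfolding burling_tree_def by blast
  ultimately show ?thesis
    using that assms(2) unfolding branch_set_def by blast
qed

lemma arc_tail_last_sibling:
  assumes "u \<in> V" and "v \<in> c u"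
  shows "last_sibling u \<in> V" and "p (last_sibling u) = p u" and "p u \<preceq> last_sibling u"
    and "depth (last_sibling u) = depth u"
    and "last_sibling u \<noteq> u" and "c (last_sibling u) = {}"
proof -
  have u: "u \<noteq> r" "\<not> last_born r p l u"
    using arc_setE[OF assms] by blast+
  then have "u \<in> children V r p (p u)"
    using assms(1) by (simp add: children_def)
  then have "\<not> is_leaf V r p (p u)"
    by (auto simp: is_leaf_def)
  then have "last_sibling u \<in> children V r p (p u)"
    using burling parent_in_V assms(1) u unfolding burling_tree_def by blast
  then have m: "last_sibling u \<in> V" "last_sibling u \<noteq> r" "p (last_sibling u) = p u"
    unfolding children_def by auto
  then show "last_sibling u \<in> V" and "p (last_sibling u) = p u" and "p u \<preceq> last_sibling u"
    and "depth (last_sibling u) = depth u"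
    using parent_anc_eq depth_parent assms(1) u by (blast, blast, metis, metis)
  show "last_sibling u \<noteq> u"
    using u by (simp add: last_born_def)
  have "last_born r p l (last_sibling u)"
    using m by (simp add: last_born_def)
  then show "c (last_sibling u) = {}"
    using burling m(1) unfolding burling_tree_def by blast
qed

lemma arc_head_below_last_sibling:
  assumes "u \<in> V" and "v \<in> c u"
  shows "last_sibling u \<preceq> v" and "v \<in> V"
proof -
  obtain y where "y \<in> V" and "c u = {z. last_sibling u \<preceq> z \<and> z \<preceq> y}"
    using arc_setE assms .
  with assms(2) show "last_sibling u \<preceq> v" and "v \<in> V"
    using anc_eq_in_V[of y v] by blast+
qed

lemma arc_heads_chain:
  assumes "u \<in> V" and "v \<in> c u" and "w \<in> c u"
  shows "v \<preceq> w \<or> w \<preceq> v"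
proof -
  obtain y where "y \<in> V" and "c u = {z. last_sibling u \<preceq> z \<and> z \<preceq> y}"
    using arc_setE assms(1,2) .
  with assms(2,3) show ?thesis
    using anc_eq_linear[of y v w] by blast
qed

lemma arc_heads_convex:
  assumes "u \<in> V" and "v \<in> c u" and "last_sibling u \<preceq> t" and "t \<preceq> v"
  shows "t \<in> c u"
proof -
  obtain y where "y \<in> V" and "c u = {z. last_sibling u \<preceq> z \<and> z \<preceq> y}"
    using arc_setE assms(1,2) .
  with assms(2-4) show ?thesis
    using anc_eq_trans[of y t v] by blast
qed

lemma arc_ends_incomparable:
  assumes "u \<in> V" and "v \<in> c u"
  shows "\<not> u \<preceq> v" and "\<not> v \<preceq> u"
proof -
  note m = arc_tail_last_sibling[OF assms]
  have mv: "last_sibling u \<preceq> v" and vV: "v \<in> V"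
    using arc_head_below_last_sibling[OF assms] by auto
  show "\<not> u \<preceq> v"
  proof
    assume "u \<preceq> v"
    then have "u \<preceq> last_sibling u \<or> last_sibling u \<preceq> u"
      using anc_eq_linear[OF vV _ mv] by blast
    then show False
      using anc_eq_depth_eq[of u "last_sibling u"] anc_eq_depth_eq[of "last_sibling u" u] m assms(1)
      by metis
  qed
  show "\<not> v \<preceq> u"
  proof
    assume "v \<preceq> u"
    then have "last_sibling u \<preceq> u"
      using anc_eq_trans[OF assms(1) mv] by blast
    then show False
      using anc_eq_depth_eq[of u "last_sibling u"] anc_eq_depth_eq[of "last_sibling u" u] m assms(1)
      by metis
  qed
qed

text \<open>An arc never decreases the depth, and an arc between vertices of equal depth ends at a
  last-born, whose value under c is empty while that of the tail is not.\<close>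
definition arc_rank :: "'a \<Rightarrow> nat" where
  "arc_rank x = 2 * depth x + (if c x = {} then 1 else 0)"

lemma arc_rank_less:
  assumes "u \<in> V" and "v \<in> c u"
  shows "arc_rank u < arc_rank v"
proof -
  note m = arc_tail_last_sibling[OF assms]
  have mv: "last_sibling u \<preceq> v" and vV: "v \<in> V"
    using arc_head_below_last_sibling[OF assms] by auto
  have "depth u \<le> depth v"
    using depth_anc_eq_le[OF vV mv] m(4) by simp
  moreover have "c v = {}" if "depth v = depth u"
    using anc_eq_depth_eq[OF vV mv] m that by simp
  ultimately show ?thesis
    using assms(2) unfolding arc_rank_def by (cases "depth v = depth u") auto
qed

lemma arc_trancl_rank_less:
  assumes "Y \<subseteq> V" and "(a, b) \<in> {(x, y). arc c Y x y}\<^sup>+"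
  shows "arc_rank a < arc_rank b"
  using assms(2)
proof induction
  case (base b)
  then show ?case
    using assms(1) arc_rank_less by (auto simp: arc_def)
next
  case (step b b')
  then show ?case
    using assms(1) arc_rank_less[of b b'] by (auto simp: arc_def)
qed

end

section \<open>The top-set of a derived graph\<close>

locale burling_subgraph = burling +
  fixes X :: "'a set"
  assumes X_subset: "X \<subseteq> V"
begin

abbreviation G :: "'a \<Rightarrow> 'a \<Rightarrow> bool" where
  "G \<equiv> arc c X"

abbreviation S :: "'a set" where
  "S \<equiv> top_set r p X"

lemma top_set_iff: "t \<in> S \<longleftrightarrow> t \<in> X \<and> (\<forall>u\<in>X. u \<preceq> t \<longrightarrow> u = t)"
  unfolding top_set_def by auto

lemma top_set_subset: "S \<subseteq> X"
  unfolding top_set_def by blast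

lemma finite_top_set: "finite S"
  using finite_V X_subset top_set_subset by (meson finite_subset)

lemma arcD:
  assumes "G a b"
  shows "a \<in> X" and "b \<in> X" and "b \<in> c a" and "a \<in> V" and "b \<in> V"
  using assms X_subset unfolding arc_def by auto

lemma arc_incomparable: "G a b \<Longrightarrow> \<not> a \<preceq> b \<and> \<not> b \<preceq> a"
  using arcD(3,4) arc_ends_incomparable by meson

lemma arc_irrefl: "\<not> G a a"
  using arc_incomparable anc_eq_refl by blast

lemma arc_top_set_iff: "u \<in> S \<Longrightarrow> w \<in> S \<Longrightarrow> arc c S u w \<longleftrightarrow> G u w"
  using top_set_subset unfolding arc_def by auto

lemma ex_top_above: "x \<in> X \<Longrightarrow> \<exists>t\<in>S. t \<preceq> x"
proof (induction "depth x" arbitrary: x rule: less_induct)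
  case less
  show ?case
  proof (cases "x \<in> S")
    case True
    then show ?thesis
      using anc_eq_refl by blast
  next
    case False
    then obtain u where u: "u \<in> X" "u \<preceq> x" "u \<noteq> x"
      using less.prems top_set_iff by blast
    have xV: "x \<in> V"
      using less.prems X_subset by auto
    have "depth u < depth x"
      using depth_anc_eq_le[OF xV u(2)] anc_eq_depth_eq[OF xV u(2)] u(3) by fastforce
    then obtain t where "t \<in> S" and "t \<preceq> u"
      using less.hyps u(1) by blast
    then show ?thesis
      using anc_eq_trans[OF xV] u(2) by blast
  qed
qed

lemma top_above_unique:
  assumes "x \<in> X" and "t \<in> S" and "t' \<in> S" and "t \<preceq> x" and "t' \<preceq> x"
  shows "t = t'"
proof -
  have "t \<preceq> t' \<or> t' \<preceq> t"
    using anc_eq_linear assms X_subset by blast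
  then show ?thesis
    using assms(2,3) top_set_iff by blast
qed

definition top_of :: "'a \<Rightarrow> 'a" where
  "top_of x = (THE t. t \<in> S \<and> t \<preceq> x)"

lemma top_of:
  assumes "x \<in> X"
  shows "top_of x \<in> S" and "top_of x \<preceq> x"
proof -
  have "\<exists>!t. t \<in> S \<and> t \<preceq> x"
    using ex_top_above[OF assms] top_above_unique[OF assms] by blast
  then have "top_of x \<in> S \<and> top_of x \<preceq> x"
    unfolding top_of_def by (rule theI')
  then show "top_of x \<in> S" and "top_of x \<preceq> x"
    by auto
qed

lemma top_of_eqI: "x \<in> X \<Longrightarrow> t \<in> S \<Longrightarrow> t \<preceq> x \<Longrightarrow> top_of x = t"
  using top_of[of x] top_above_unique[of x "top_of x" t] by blast

lemma top_of_top: "t \<in> S \<Longrightarrow> top_of t = t"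
  using top_of_eqI[of t t] top_set_subset anc_eq_refl by blast

lemma arc_into_top_set_unique:
  assumes "G a v" and "G a w" and "v \<in> S" and "w \<in> S"
  shows "v = w"
proof -
  have "v \<preceq> w \<or> w \<preceq> v"
    using arc_heads_chain arcD assms(1,2) by blast
  then show ?thesis
    using assms(3,4) top_set_iff by blast
qed

text \<open>The branch c a hangs below a sibling of a, so a proper ancestor of a in X would also lie above b;
  and the top vertex above b, which cannot lie above a, lies on that branch.\<close>
lemma arc_across_top_classes:
  assumes ab: "G a b" and ne: "top_of a \<noteq> top_of b"
  shows "a \<in> S" and "G a (top_of b)"
proof -
  have aX: "a \<in> X" and bX: "b \<in> X" and bc: "b \<in> c a" and aV: "a \<in> V" and bV: "b \<in> V"
    using arcD[OF ab] by auto
  have a_ne_r: "a \<noteq> r"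
    using arc_setE[OF aV bc] by blast
  note m = arc_tail_last_sibling[OF aV bc]
  have mb: "last_sibling a \<preceq> b"
    using arc_head_below_last_sibling[OF aV bc] by blast
  note ta = top_of[OF aX] and tb = top_of[OF bX]
  show aS: "a \<in> S"
  proof (rule ccontr)
    assume "a \<notin> S"
    then have "top_of a \<preceq> p a"
      using anc_eq_parent[OF aV ta(2)] ta(1) by fastforce
    then have "top_of a \<preceq> b"
      using anc_eq_trans[OF m(1) _ m(3)] anc_eq_trans[OF bV _ mb] by blast
    then show False
      using top_of_eqI[OF bX ta(1)] ne by simp
  qed
  have "last_sibling a \<preceq> top_of b"
  proof (rule ccontr)
    assume n: "\<not> last_sibling a \<preceq> top_of b"
    then have "top_of b \<preceq> last_sibling a" and "top_of b \<noteq> last_sibling a"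
      using anc_eq_linear[OF bV tb(2) mb] by auto
    then have "top_of b \<preceq> p a"
      using anc_eq_parent[OF m(1)] m(2) by simp
    then have "top_of b \<preceq> a"
      using anc_eq_trans[OF aV _ parent_anc_eq[OF aV a_ne_r]] by blast
    then have "top_of b = a"
      using aS tb(1) top_set_iff top_set_subset by blast
    then show False
      using ne top_of_top[OF aS] by simp
  qed
  then have "top_of b \<in> c a"
    using arc_heads_convex[OF aV bc _ tb(2)] by blast
  then show "G a (top_of b)"
    using aX tb(1) top_set_subset unfolding arc_def by blast
qed

lemma pivot_iff: "s \<in> pivots r p c X \<longleftrightarrow> s \<in> S \<and> (\<forall>w\<in>S. \<not> G s w)"
  unfolding pivots_def is_sink_def using arc_top_set_iff by auto

lemma ex_pivot:
  assumes "X \<noteq> {}"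
  obtains s where "s \<in> pivots r p c X"
proof -
  have "S \<noteq> {}"
    using ex_top_above assms by blast
  then have "Max (arc_rank ` S) \<in> arc_rank ` S"
    using finite_top_set by simp
  then obtain s where s: "s \<in> S" "arc_rank s = Max (arc_rank ` S)"
    by (metis imageE)
  have "\<not> G s w" if "w \<in> S" for w
  proof
    assume "G s w"
    then have "arc_rank s < arc_rank w"
      using arc_rank_less arcD by blast
    moreover have "arc_rank w \<le> arc_rank s"
      using s(2) finite_top_set that by simp
    ultimately show False
      by simp
  qed
  with s(1) show ?thesis
    using that pivot_iff by blast
qed

text \<open>The vertices whose top vertex reaches t inside G[S] can leave that set only through t, and t'
  is not among them since G is acyclic; as t is no cut vertex, t is the only one.\<close>
lemma top_arc_tail_isolated:
  assumes no_cut: "\<not> cut_vertex G X t" and t: "t \<in> S" and t': "t' \<in> S" and tt': "G t t'"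
  shows "x \<in> X \<Longrightarrow> top_of x = t \<Longrightarrow> x = t" and "a \<in> S \<Longrightarrow> \<not> G a t"
proof -
  define R where "R = {(a, b). arc c S a b}"
  define W where "W = {x \<in> X. (top_of x, t) \<in> R\<^sup>*}"
  have tX: "t \<in> X"
    using t top_set_subset by blast
  have closed: "z \<in> W" if x: "x \<in> W" "x \<noteq> t" and z: "z \<in> X" "adj G x z" for x z
  proof -
    have xX: "x \<in> X" and reach: "(top_of x, t) \<in> R\<^sup>*"
      using x unfolding W_def by auto
    show ?thesis
    proof (cases "top_of z = top_of x")
      case True
      then show ?thesis
        using z(1) reach unfolding W_def by simp
    next
      case False
      from z(2) consider "G x z" | "G z x"
        unfolding adj_def by blast
      then show ?thesis
      proof cases
        case 1
        then have xS: "x \<in> S" and xz: "G x (top_of z)"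
          using arc_across_top_classes False by metis+
        then obtain y where "(x, y) \<in> R" and "(y, t) \<in> R\<^sup>*"
          using reach x(2) top_of_top by (metis converse_rtranclE)
        then have "y \<in> S" and "G x y"
          using top_set_subset unfolding R_def arc_def by auto
        then have "y = top_of z"
          using arc_into_top_set_unique[OF _ xz] top_of(1)[OF z(1)] by blast
        with \<open>(y, t) \<in> R\<^sup>*\<close> show ?thesis
          using z(1) unfolding W_def by simp
      next
        case 2
        then have "z \<in> S" and "G z (top_of x)"
          using arc_across_top_classes False by metis+
        then have "(top_of z, top_of x) \<in> R"
          using top_of_top top_of[OF xX] arc_top_set_iff unfolding R_def by auto
        then show ?thesis
          using reach z(1) converse_rtrancl_into_rtrancl unfolding W_def by fastforce
      qed
    qed
  qed
  have "t' \<notin> W"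
  proof
    assume "t' \<in> W"
    then have "(t', t) \<in> R\<^sup>*"
      using top_of_top[OF t'] unfolding W_def by simp
    moreover have "(t, t') \<in> R"
      using t t' tt' arc_top_set_iff unfolding R_def by simp
    ultimately have "(t, t) \<in> R\<^sup>+"
      by (meson rtrancl_into_trancl2)
    then show False
      using arc_trancl_rank_less[of S t t] top_set_subset X_subset unfolding R_def by auto
  qed
  have W_trivial: "x = t" if "x \<in> W" for x
  proof (rule ccontr)
    assume "x \<noteq> t"
    then have "X - {t} \<subseteq> W"
      using not_cut_vertex_subset_if_closed[OF no_cut tX _ that] closed that
      unfolding W_def by blast
    moreover have "t' \<in> X - {t}"
      using t' top_set_subset tt' arc_irrefl by blast
    ultimately show False
      using \<open>t' \<notin> W\<close> by blast
  qed
  show "x \<in> X \<Longrightarrow> top_of x = t \<Longrightarrow> x = t"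
    using W_trivial unfolding W_def by simp
  show "a \<in> S \<Longrightarrow> \<not> G a t"
  proof
    assume "a \<in> S" and "G a t"
    then have "a \<in> W"
      using t top_of_top top_set_subset arc_top_set_iff unfolding W_def R_def by auto
    then show False
      using W_trivial \<open>G a t\<close> arc_irrefl by blast
  qed
qed

lemma adj_top_arc_tail:
  assumes no_cut: "\<not> cut_vertex G X t" and t: "t \<in> S" and s: "s \<in> S" and ts: "G t s"
    and ty: "adj G t y"
  shows "top_of y = s"
proof -
  have yX: "y \<in> X"
    using ty unfolding adj_def arc_def by blast
  have ne: "top_of y \<noteq> top_of t"
  proof
    assume "top_of y = top_of t"
    then have "y = t"
      using top_arc_tail_isolated(1)[OF no_cut t s ts yX] top_of_top[OF t] by simp
    with ty show False
      using arc_irrefl unfolding adj_def by blast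
  qed
  from ty consider "G t y" | "G y t"
    unfolding adj_def by blast
  then show ?thesis
  proof cases
    case 1
    then have "G t (top_of y)"
      using arc_across_top_classes(2)[OF 1] ne by auto
    then show ?thesis
      using arc_into_top_set_unique[OF _ ts] top_of(1)[OF yX] s by blast
  next
    case 2
    then have "y \<in> S" and "G y t"
      using arc_across_top_classes[OF 2] ne top_of_top[OF t] by auto
    then show ?thesis
      using top_arc_tail_isolated(2)[OF no_cut t s ts] by blast
  qed
qed

lemma adj_top_class_of_pivot:
  assumes pivot: "s \<in> pivots r p c X" and xs: "top_of x = s" and xy: "adj G x y"
  shows "top_of y = s \<or> (y \<in> S \<and> G y s)"
proof (cases "top_of y = s")
  case False
  from xy consider "G x y" | "G y x"
    unfolding adj_def by blast
  then show ?thesis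
  proof cases
    case 1
    then have "x = s" and "G x (top_of y)"
      using arc_across_top_classes[OF 1] False xs top_of_top by auto
    moreover have "top_of y \<in> S"
      using 1 arcD(2) top_of(1) by blast
    ultimately show ?thesis
      using pivot pivot_iff by blast
  next
    case 2
    then show ?thesis
      using arc_across_top_classes[OF 2] False xs by auto
  qed
qed simp

end

locale burling_block = burling_subgraph +
  fixes s :: 'a
  assumes connected: "connected_on (arc c X) X"
    and no_cut_vertex: "\<forall>v\<in>X. \<not> cut_vertex (arc c X) X v"
    and pivot: "s \<in> pivots r p c X"
begin

lemma pivot_in_top_set: "s \<in> S"
  using pivot pivot_iff by blast

lemma top_of_or_arc_into_pivot:
  assumes "x \<in> X"
  shows "top_of x = s \<or> (x \<in> S \<and> G x s)"
proof -
  have "X \<subseteq> {x. top_of x = s \<or> (x \<in> S \<and> G x s)}"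
  proof (rule connected_on_subset_if_closed[OF connected])
    show "s \<in> X" and "s \<in> {x. top_of x = s \<or> (x \<in> S \<and> G x s)}"
      using pivot_in_top_set top_set_subset top_of_top by auto
  next
    fix x z
    assume "x \<in> {x. top_of x = s \<or> (x \<in> S \<and> G x s)}" and "adj G x z"
    then show "z \<in> {x. top_of x = s \<or> (x \<in> S \<and> G x s)}"
      using adj_top_class_of_pivot[OF pivot] adj_top_arc_tail[OF _ _ pivot_in_top_set]
        no_cut_vertex top_set_subset by blast
  qed
  with assms show ?thesis
    by blast
qed

lemma top_set_arcs:
  assumes "u \<in> S" and "w \<in> S"
  shows "arc c S u w \<longleftrightarrow> u \<noteq> s \<and> w = s"
proof
  assume "arc c S u w"
  then have uw: "G u w"
    using arc_top_set_iff assms by blast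
  then have "u \<noteq> s"
    using pivot pivot_iff assms(2) by blast
  then have "G u s"
    using top_of_or_arc_into_pivot[of u] top_of_top assms(1) top_set_subset by auto
  with uw show "u \<noteq> s \<and> w = s"
    using arc_into_top_set_unique assms(2) pivot_in_top_set \<open>u \<noteq> s\<close> by blast
next
  assume "u \<noteq> s \<and> w = s"
  then show "arc c S u w"
    using top_of_or_arc_into_pivot[of u] top_of_top assms top_set_subset arc_top_set_iff by auto
qed

lemma top_set_in_star: "in_star_with_sink (arc c S) S s"
  using in_star_with_sinkI[OF finite_top_set pivot_in_top_set] top_set_arcs by blast

lemma neighbours_of_pivot: "{u \<in> X. adj G s u} \<subseteq> S - {s}"
proof
  fix u
  assume u: "u \<in> {u \<in> X. adj G s u}"
  then have "\<not> s \<preceq> u"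
    using arc_incomparable unfolding adj_def by blast
  then have "u \<in> S" and "G u s"
    using top_of_or_arc_into_pivot[of u] top_of(2)[of u] u by auto
  then show "u \<in> S - {s}"
    using arc_irrefl by blast
qed

lemma top_set_sources:
  assumes u: "u \<in> S - {s}"
  shows "is_source G X u"
  unfolding is_source_def
proof (intro conjI ballI notI)
  have uS: "u \<in> S" and us: "G u s" and no_cut: "\<not> cut_vertex G X u"
    using u top_set_arcs[of u s] pivot_in_top_set arc_top_set_iff no_cut_vertex top_set_subset
    by auto
  show "u \<in> X"
    using uS top_set_subset by blast
  fix w
  assume "w \<in> X" and "G w u"
  show False
  proof (cases "top_of w = u")
    case True
    then show False
      using top_arc_tail_isolated(1)[OF no_cut uS pivot_in_top_set us \<open>w \<in> X\<close>]
        \<open>G w u\<close> arc_irrefl by auto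
  next
    case False
    then have "w \<in> S" and "G w u"
      using arc_across_top_classes[OF \<open>G w u\<close>] top_of_top[OF uS] by auto
    then show False
      using top_arc_tail_isolated(2)[OF no_cut uS pivot_in_top_set us] by blast
  qed
qed

lemma pivot_ancestor:
  assumes "w \<in> X - S"
  shows "ancestor r p s w"
proof -
  have "top_of w = s"
    using top_of_or_arc_into_pivot assms by blast
  then have "s \<preceq> w" and "s \<noteq> w"
    using top_of(2) assms pivot_in_top_set by auto
  then show ?thesis
    by (simp add: ancestor_eq_def)
qed

end

theorem lemma4p7:
  fixes V X :: "'a set" and r :: 'a and p l :: "'a \<Rightarrow> 'a" and c :: "'a \<Rightarrow> 'a set"
  assumes "burling_tree V r p l c"
    and "X \<subseteq> V"
    and "connected_on (arc c X) X"
    and "\<forall>v\<in>X. \<not> cut_vertex (arc c X) X v"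
    and "\<forall>v\<in>X. degree (arc c X) X v \<ge> 2"
  shows "\<exists>s. in_star_with_sink (arc c (top_set r p X)) (top_set r p X) s
           \<and> card (top_set r p X - {s}) \<ge> 2
           \<and> pivots r p c X = {s}
           \<and> antennas r p c X = {u \<in> top_set r p X. arc c (top_set r p X) u s}
           \<and> (\<forall>u\<in>top_set r p X - {s}. is_source (arc c X) X u)
           \<and> (\<forall>w\<in>X - top_set r p X. ancestor r p s w)"
proof -
  interpret burling_subgraph V r p l c X
    using assms(1,2) by unfold_locales
  have "X \<noteq> {}"
    using assms(3) unfolding connected_on_def by blast
  then obtain s where "s \<in> pivots r p c X"
    by (rule ex_pivot)
  then interpret burling_block V r p l c X s
    using assms(3,4) by unfold_locales
  have "2 \<le> degree G X s"
    using assms(5) pivot_in_top_set top_set_subset by blast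
  also have "\<dots> \<le> card (S - {s})"
    unfolding degree_def using neighbours_of_pivot finite_top_set by (intro card_mono) auto
  finally have two_leaves: "2 \<le> card (S - {s})" .
  have "pivots r p c X = {s}"
    using top_set_in_star unfolding in_star_with_sink_def pivots_def by blast
  moreover have "antennas r p c X = {u \<in> S. arc c S u s}"
  proof -
    have "S - {s} \<noteq> {}"
      using two_leaves by force
    then show ?thesis
      unfolding antennas_def
      using sources_of_in_star[where A = "arc c S", OF pivot_in_top_set _ top_set_arcs] by blast
  qed
  ultimately show ?thesis
    using top_set_in_star two_leaves top_set_sources pivot_ancestor by blast
qed

end
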